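(* (Dissection Theorem.) As formal power series in $q$ (equivalently, as analytic functions for $|q|<1$), \[ \frac{(-q;q^2)_\infty}{(q^4;q^4)_\infty\,(-q^2;q^4)_\infty^{2}} = F_0(-q^2) + q\,F_1(-q^2), \] where for $i=0,1$ \[ F_i(q) = \frac{1}{(q;q)_\infty}\cdot\frac{1}{(q^{1+2i};q^8)_\infty\,(q^2;q^8)_\infty\,(q^4;q^8)_\infty\,(q^6;q^8)_\infty\,(q^{7-2i};q^8)_\infty}. \]
   Context: Here $(a;q)_\infty=\prod_{j\ge0}(1-aq^j)$. *)

theory Defs
  imports "HOL-Analysis.Analysis"
begin

definition qpoch :: "complex \<Rightarrow> complex \<Rightarrow> complex" where
  "qpoch a q = (\<Prod>j. 1 - a * q ^ j)"

definition Fdis :: "nat \<Rightarrow> complex \<Rightarrow> complex" where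
  "Fdis i q = 1 / qpoch q q *
     (1 / (qpoch (q ^ (1 + 2 * i)) (q ^ 8) * qpoch (q ^ 2) (q ^ 8) * qpoch (q ^ 4) (q ^ 8)
           * qpoch (q ^ 6) (q ^ 8) * qpoch (q ^ (7 - 2 * i)) (q ^ 8)))"

end

theory Submission
  imports Defs
begin

(* By the Jacobi triple product, (-q;q^2)(q^4;q^4) is the series of q^(j(j+1)/2) over j >= 0.
   Sorting the triangular exponents by j mod 4 and applying the triple product again with base
   q^16 gives the 2-dissection
     (-q;q^2)(q^4,q^8,q^12;q^16) = (-q^6,-q^10;q^16) + q (-q^2,-q^14;q^16).
   Dividing by (q^4;q^4)(-q^2;q^4)^2, whose factors also split modulo 16, and using
   (-q^2;-q^2) = (-q^2;q^4)(q^4;q^4), turns the two terms into F_0(-q^2) and q F_1(-q^2).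
   The triple product itself is the limit n -> oo of its finite form
     prod_{i<n} (1 + z p^(2i+1)) (1 + p^(2i+1)/z) = sum_{|k|<=n} [2n, n+k]_(p^2) p^(k^2) z^k,
   an instance of the q-binomial theorem; the limit is taken with Tannery's theorem. *)

section \<open>q-Pochhammer products\<close>

lemma convergent_prod_qpoch:
  fixes a q :: complex
  assumes "norm q < 1"
  shows "convergent_prod (\<lambda>j. 1 - a * q ^ j)"
proof -
  have "summable (\<lambda>j. norm a * norm q ^ j)"
    using assms by (intro summable_mult summable_geometric) auto
  then have "summable (\<lambda>j. norm ((1 - a * q ^ j) - 1))"
    by (simp add: norm_mult norm_power)
  then show ?thesis
    by (intro abs_convergent_prod_imp_convergent_prod summable_imp_abs_convergent_prod)
qed

lemma qpoch_LIMSEQ: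
  fixes a q :: complex
  assumes "norm q < 1"
  shows "(\<lambda>n. \<Prod>j<n. 1 - a * q ^ j) \<longlonglongrightarrow> qpoch a q"
  unfolding qpoch_def
  by (intro has_prod_imp_tendsto' convergent_prod_has_prod convergent_prod_qpoch assms)

lemma qpoch_nonzero:
  fixes a q :: complex
  assumes "norm q < 1" and "norm a < 1"
  shows "qpoch a q \<noteq> 0"
  unfolding qpoch_def
proof (rule prodinf_nonzero[OF convergent_prod_qpoch[OF assms(1)]])
  fix j
  have "norm (a * q ^ j) \<le> norm a"
    using assms by (simp add: norm_mult norm_power mult_left_le power_le_one)
  then show "1 - a * q ^ j \<noteq> 0"
    using assms(2) by auto
qed

lemma qpoch_dissect:
  fixes a q :: complex
  assumes "norm q < 1" and "m > 0"
  shows "qpoch a q = (\<Prod>r<m. qpoch (a * q ^ r) (q ^ m))"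
proof -
  have qm: "norm (q ^ m) < 1"
    using assms by (simp add: norm_power power_less_one_iff)
  have "(\<lambda>n. \<Prod>j<n * m. 1 - a * q ^ j) \<longlonglongrightarrow> qpoch a q"
    using LIMSEQ_subseq_LIMSEQ[OF qpoch_LIMSEQ[OF assms(1)], of "\<lambda>n. n * m"] assms(2)
    by (simp add: o_def strict_mono_def)
  moreover have "(\<Prod>j<n * m. 1 - a * q ^ j) = (\<Prod>r<m. \<Prod>k<n. 1 - a * q ^ r * (q ^ m) ^ k)" for n
  proof -
    have "(\<Prod>j<n * m. 1 - a * q ^ j) = (\<Prod>k<n. \<Prod>j\<in>{k * m..<k * m + m}. 1 - a * q ^ j)"
      by (rule prod.nat_group[symmetric])
    also have "\<dots> = (\<Prod>k<n. \<Prod>r<m. 1 - a * q ^ r * (q ^ m) ^ k)"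
    proof (rule prod.cong[OF refl])
      fix k
      have "(\<Prod>j\<in>{k * m..<k * m + m}. 1 - a * q ^ j) = (\<Prod>r\<in>{0..<m}. 1 - a * q ^ (r + k * m))"
        using prod.shift_bounds_nat_ivl[of "\<lambda>j. 1 - a * q ^ j" 0 "k * m" m] by (simp add: add.commute)
      then show "(\<Prod>j\<in>{k * m..<k * m + m}. 1 - a * q ^ j) = (\<Prod>r<m. 1 - a * q ^ r * (q ^ m) ^ k)"
        by (simp add: atLeast0LessThan power_add power_mult[symmetric] mult.commute mult.assoc)
    qed
    also have "\<dots> = (\<Prod>r<m. \<Prod>k<n. 1 - a * q ^ r * (q ^ m) ^ k)"
      by (rule prod.swap)
    finally show ?thesis .
  qed
  moreover have "(\<lambda>n. \<Prod>r<m. \<Prod>k<n. 1 - a * q ^ r * (q ^ m) ^ k)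
      \<longlonglongrightarrow> (\<Prod>r<m. qpoch (a * q ^ r) (q ^ m))"
    by (intro tendsto_prod qpoch_LIMSEQ qm)
  ultimately show ?thesis
    using LIMSEQ_unique by auto
qed

lemma qpoch_dissect_2:
  fixes a q :: complex
  assumes "norm q < 1"
  shows "qpoch a q = qpoch a (q\<^sup>2) * qpoch (a * q) (q\<^sup>2)"
  using qpoch_dissect[OF assms, of 2 a] by (simp add: numeral_2_eq_2)

lemma qpoch_dissect_4:
  fixes a q :: complex
  assumes "norm q < 1"
  shows "qpoch a q
       = qpoch a (q ^ 4) * qpoch (a * q) (q ^ 4) * qpoch (a * q\<^sup>2) (q ^ 4) * qpoch (a * q ^ 3) (q ^ 4)"
  using qpoch_dissect[OF assms, of 4 a] by (simp add: eval_nat_numeral mult_ac)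


section \<open>Gaussian binomial coefficients\<close>

fun qbinomial :: "'a :: comm_ring_1 \<Rightarrow> nat \<Rightarrow> nat \<Rightarrow> 'a" where
  "qbinomial P 0 k = (if k = 0 then 1 else 0)"
| "qbinomial P (Suc n) 0 = 1"
| "qbinomial P (Suc n) (Suc k) = qbinomial P n k + P ^ Suc k * qbinomial P n (Suc k)"

definition qpoch_fin :: "'a :: comm_ring_1 \<Rightarrow> nat \<Rightarrow> 'a" where
  "qpoch_fin P n = (\<Prod>j<n. 1 - P ^ Suc j)"

lemma qbinomial_0_right [simp]: "qbinomial P n 0 = 1"
  by (cases n) auto

lemma qbinomial_eq_0: "n < k \<Longrightarrow> qbinomial P n k = 0"
proof (induction n arbitrary: k)
  case (Suc n)
  then obtain k' where "k = Suc k'"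
    by (cases k) auto
  with Suc show ?case
    by simp
qed simp

lemma qpoch_fin_Suc: "qpoch_fin P (Suc n) = qpoch_fin P n * (1 - P ^ Suc n)"
  by (simp add: qpoch_fin_def)

lemma power_Suc_choose_two: "P ^ (Suc k choose 2) = P ^ (k choose 2) * P ^ k" for P :: "'a :: monoid_mult"
proof -
  have "Suc k choose 2 = (k choose 2) + k"
    by (simp add: numeral_2_eq_2)
  then show ?thesis
    by (simp only: power_add)
qed

theorem qbinomial_theorem:
  fixes x P :: "'a :: comm_ring_1"
  shows "(\<Prod>j<n. 1 + x * P ^ j) = (\<Sum>k\<le>n. qbinomial P n k * P ^ (k choose 2) * x ^ k)"
proof (induction n arbitrary: x)
  case (Suc n)
  define c where "c k = qbinomial P n k * P ^ (Suc k choose 2)" for k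
  have "(\<Prod>j<Suc n. 1 + x * P ^ j) = (1 + x) * (\<Prod>j<n. 1 + (x * P) * P ^ j)"
    by (subst prod.lessThan_Suc_shift) (simp add: mult_ac)
  also have "\<dots> = (1 + x) * (\<Sum>k\<le>n. qbinomial P n k * P ^ (k choose 2) * (x * P) ^ k)"
    by (simp only: Suc)
  also have "\<dots> = (1 + x) * (\<Sum>k\<le>n. c k * x ^ k)"
    by (simp add: c_def power_Suc_choose_two power_mult_distrib mult_ac)
  also have "\<dots> = (\<Sum>k\<le>Suc n. c k * x ^ k) + (\<Sum>k\<le>n. c k * x ^ Suc k)"
    by (simp add: distrib_right sum_distrib_left sum.distrib c_def qbinomial_eq_0 mult_ac)
  also have "(\<Sum>k\<le>Suc n. c k * x ^ k) = 1 + (\<Sum>k\<le>n. c (Suc k) * x ^ Suc k)"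
    by (subst sum.atMost_Suc_shift) (simp add: c_def numeral_2_eq_2)
  also have "1 + (\<Sum>k\<le>n. c (Suc k) * x ^ Suc k) + (\<Sum>k\<le>n. c k * x ^ Suc k)
      = 1 + (\<Sum>k\<le>n. qbinomial P (Suc n) (Suc k) * P ^ (Suc k choose 2) * x ^ Suc k)"
    by (simp add: c_def power_Suc_choose_two[of P "Suc k" for k] sum.distrib[symmetric] algebra_simps)
  also have "\<dots> = (\<Sum>k\<le>Suc n. qbinomial P (Suc n) k * P ^ (k choose 2) * x ^ k)"
    by (simp only: sum.atMost_Suc_shift[of _ n]) (simp add: numeral_2_eq_2)
  finally show ?case .
qed (simp add: numeral_2_eq_2)

lemma qbinomial_mult_qpoch_fin:
  fixes P :: "'a :: comm_ring_1"
  assumes "k \<le> n"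
  shows "qbinomial P n k * qpoch_fin P k * qpoch_fin P (n - k) = qpoch_fin P n"
  using assms
proof (induction n arbitrary: k)
  case (Suc n)
  show ?case
  proof (cases k)
    case (Suc k')
    with Suc.prems have "k' \<le> n"
      by simp
    have "qbinomial P n k' * qpoch_fin P (Suc k') * qpoch_fin P (n - k')
        = (qbinomial P n k' * qpoch_fin P k' * qpoch_fin P (n - k')) * (1 - P ^ Suc k')"
      by (simp add: qpoch_fin_Suc mult_ac)
    then have left: "qbinomial P n k' * qpoch_fin P (Suc k') * qpoch_fin P (n - k')
        = qpoch_fin P n * (1 - P ^ Suc k')"
      by (simp only: Suc.IH[OF \<open>k' \<le> n\<close>])
    have right: "P ^ Suc k' * qbinomial P n (Suc k') * qpoch_fin P (Suc k') * qpoch_fin P (n - k')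
        = P ^ Suc k' * qpoch_fin P n * (1 - P ^ (n - k'))"
    proof (cases "k' = n")
      case False
      then have "n - k' = Suc (n - Suc k')" and "Suc k' \<le> n"
        using \<open>k' \<le> n\<close> by auto
      then have "P ^ Suc k' * qbinomial P n (Suc k') * qpoch_fin P (Suc k') * qpoch_fin P (n - k')
          = P ^ Suc k' * (qbinomial P n (Suc k') * qpoch_fin P (Suc k') * qpoch_fin P (n - Suc k'))
            * (1 - P ^ (n - k'))"
        by (simp add: qpoch_fin_Suc mult_ac)
      then show ?thesis
        by (simp only: Suc.IH[OF \<open>Suc k' \<le> n\<close>])
    qed (simp add: qbinomial_eq_0)
    have "P ^ Suc k' * (1 - P ^ (n - k')) = P ^ Suc k' - P ^ Suc n"
      using \<open>k' \<le> n\<close> by (simp add: algebra_simps power_add[symmetric])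
    then show ?thesis
      using left right \<open>k = Suc k'\<close>
      by (simp add: qpoch_fin_Suc algebra_simps)
  qed (simp add: qpoch_fin_def)
qed (simp add: qpoch_fin_def)

lemma qpoch_fin_nonzero:
  fixes P :: "'a :: real_normed_field"
  assumes "norm P < 1"
  shows "qpoch_fin P n \<noteq> 0"
proof -
  have "norm (P ^ Suc j) < 1" for j
    using assms by (simp add: norm_power power_less_one_iff del: power_Suc)
  then have "1 - P ^ Suc j \<noteq> 0" for j
    by (metis norm_one order_less_irrefl right_minus_eq)
  then show ?thesis
    by (simp add: qpoch_fin_def)
qed

lemma qbinomial_eq_quotient:
  fixes P :: "'a :: real_normed_field"
  assumes "norm P < 1" and "k \<le> n"
  shows "qbinomial P n k = qpoch_fin P n / (qpoch_fin P k * qpoch_fin P (n - k))"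
  using qbinomial_mult_qpoch_fin[OF assms(2), of P] qpoch_fin_nonzero[OF assms(1)]
  by (simp add: field_simps)

lemma qbinomial_symmetric:
  fixes P :: "'a :: real_normed_field"
  assumes "norm P < 1" and "k \<le> n"
  shows "qbinomial P n (n - k) = qbinomial P n k"
  using assms by (simp add: qbinomial_eq_quotient mult.commute)

lemma qpoch_fin_LIMSEQ:
  fixes P :: complex
  assumes "norm P < 1"
  shows "qpoch_fin P \<longlonglongrightarrow> qpoch P P"
proof -
  have "qpoch_fin P = (\<lambda>n. \<Prod>j<n. 1 - P * P ^ j)"
    by (simp add: qpoch_fin_def fun_eq_iff)
  then show ?thesis
    using qpoch_LIMSEQ[OF assms, of P] by simp
qed

lemma qbinomial_bounded:
  fixes P :: complex
  assumes "norm P < 1"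
  obtains C where "\<And>n k. k \<le> n \<Longrightarrow> norm (qbinomial P n k) \<le> C"
proof -
  have lim: "qpoch_fin P \<longlonglongrightarrow> qpoch P P"
    using assms by (rule qpoch_fin_LIMSEQ)
  have "(\<lambda>n. 1 / qpoch_fin P n) \<longlonglongrightarrow> 1 / qpoch P P"
    using assms by (intro tendsto_divide tendsto_const lim qpoch_nonzero)
  then obtain B where B: "\<And>n. norm (1 / qpoch_fin P n) \<le> B"
    by (metis BseqE convergentI convergent_imp_Bseq)
  obtain A where A: "\<And>n. norm (qpoch_fin P n) \<le> A"
    using lim by (metis BseqE convergentI convergent_imp_Bseq)
  have "norm (qbinomial P n k) \<le> A * B * B" if "k \<le> n" for n k
  proof -
    have "norm (qbinomial P n k)
        = norm (qpoch_fin P n) * norm (1 / qpoch_fin P k) * norm (1 / qpoch_fin P (n - k))"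
      using qbinomial_eq_quotient[OF assms that] by (simp add: norm_mult norm_divide)
    also have "\<dots> \<le> A * B * B"
      using order.trans[OF norm_ge_zero A] order.trans[OF norm_ge_zero B]
      by (intro mult_mono A B) auto
    finally show ?thesis .
  qed
  then show ?thesis
    using that by blast
qed

lemma qbinomial_central_LIMSEQ:
  fixes P :: complex
  assumes "norm P < 1"
  shows "(\<lambda>n. qbinomial P (2 * n) (n + j)) \<longlonglongrightarrow> 1 / qpoch P P"
proof -
  have lim: "qpoch_fin P \<longlonglongrightarrow> qpoch P P"
    using assms by (rule qpoch_fin_LIMSEQ)
  have "(\<lambda>n. qpoch_fin P (2 * n) / (qpoch_fin P (n + j) * qpoch_fin P (n - j)))
      \<longlonglongrightarrow> qpoch P P / (qpoch P P * qpoch P P)"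
    using assms qpoch_nonzero[OF assms assms]
    by (intro tendsto_intros filterlim_compose[OF lim] filterlim_subseq strict_monoI
          filterlim_add_const_nat_at_top filterlim_minus_const_nat_at_top) auto
  moreover have "\<forall>\<^sub>F n in sequentially.
      qpoch_fin P (2 * n) / (qpoch_fin P (n + j) * qpoch_fin P (n - j)) = qbinomial P (2 * n) (n + j)"
    using eventually_ge_at_top[of j]
    by eventually_elim (simp add: qbinomial_eq_quotient[OF assms] mult_2)
  ultimately show ?thesis
    using qpoch_nonzero[OF assms assms] by (simp add: Lim_transform_eventually)
qed

lemma qbinomial_weighted_sum_LIMSEQ:
  fixes P :: complex and c :: "nat \<Rightarrow> complex"
  assumes P: "norm P < 1" and c: "summable (\<lambda>i. norm (c i))"
  shows "(\<lambda>n. \<Sum>i<n. qbinomial P (2 * n) (n + Suc i) * c i)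
           \<longlonglongrightarrow> (\<Sum>i. c i) / qpoch P P"
proof -
  obtain C where C: "\<And>n k. k \<le> n \<Longrightarrow> norm (qbinomial P n k) \<le> C"
    using qbinomial_bounded[OF P] by blast
  have C0: "0 \<le> C"
    using C[of 0 0] norm_ge_zero order.trans by blast
  define a where "a i n = (if i < n then qbinomial P (2 * n) (n + Suc i) * c i else 0)" for i n
  have lim: "(\<lambda>n. a i n) \<longlonglongrightarrow> c i / qpoch P P" for i
  proof -
    have "(\<lambda>n. qbinomial P (2 * n) (n + Suc i) * c i) \<longlonglongrightarrow> 1 / qpoch P P * c i"
      by (intro tendsto_mult_right qbinomial_central_LIMSEQ P)
    then have "(\<lambda>n. qbinomial P (2 * n) (n + Suc i) * c i) \<longlonglongrightarrow> c i / qpoch P P"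
      by simp
    moreover have "\<forall>\<^sub>F n in sequentially. qbinomial P (2 * n) (n + Suc i) * c i = a i n"
      using eventually_gt_at_top[of i] by eventually_elim (simp add: a_def)
    ultimately show ?thesis
      by (rule Lim_transform_eventually)
  qed
  have bound: "norm (a i n) \<le> C * norm (c i)" for i n
  proof (cases "i < n")
    case True
    then have "norm (a i n) = norm (qbinomial P (2 * n) (n + Suc i)) * norm (c i)"
      by (simp add: a_def norm_mult)
    also have "\<dots> \<le> C * norm (c i)"
      using True C[of "n + Suc i" "2 * n"] by (simp add: mult_right_mono)
    finally show ?thesis .
  qed (simp add: a_def C0)
  have "\<forall>\<^sub>F (i, n) in sequentially \<times>\<^sub>F sequentially. norm (a i n) \<le> C * norm (c i)"
    by (intro always_eventually allI) (simp add: case_prod_beta bound)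
  then have "(\<lambda>n. \<Sum>i. a i n) \<longlonglongrightarrow> (\<Sum>i. c i / qpoch P P)"
    using tannerys_theorem[OF lim _ summable_mult[OF c] trivial_limit_sequentially] by simp
  moreover have "(\<Sum>i. a i n) = (\<Sum>i<n. qbinomial P (2 * n) (n + Suc i) * c i)" for n
    by (subst suminf_finite[of "{..<n}"]) (simp_all add: a_def)
  moreover have "(\<Sum>i. c i / qpoch P P) = (\<Sum>i. c i) / qpoch P P"
    by (rule suminf_divide[OF summable_norm_cancel[OF c]])
  ultimately show ?thesis
    by simp
qed


section \<open>The Jacobi triple product\<close>

lemma power_mult_inverse_power_eq:
  fixes p :: "'a :: field"
  assumes "p \<noteq> 0" and "a + b = c + d"
  shows "p ^ a * (1 / p) ^ c = p ^ d * (1 / p) ^ b"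
proof -
  have "p ^ a * p ^ b = p ^ d * p ^ c"
    by (simp add: power_add[symmetric] assms(2) add.commute)
  then show ?thesis
    using assms(1) by (simp add: field_simps power_one_over)
qed

lemma prod_lessThan_double:
  fixes f :: "nat \<Rightarrow> 'a :: comm_monoid_mult"
  shows "(\<Prod>j<2 * n. f j) = (\<Prod>i<n. f (n - Suc i)) * (\<Prod>i<n. f (n + i))"
proof -
  have "(\<Prod>j<2 * n. f j) = (\<Prod>j\<in>{0..<n}. f j) * (\<Prod>j\<in>{n..<2 * n}. f j)"
    by (simp add: atLeast0LessThan[symmetric] prod.atLeastLessThan_concat)
  also have "(\<Prod>j\<in>{n..<2 * n}. f j) = (\<Prod>i<n. f (n + i))"
    using prod.shift_bounds_nat_ivl[of f 0 n n] by (simp add: mult_2 atLeast0LessThan add.commute)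
  also have "(\<Prod>j\<in>{0..<n}. f j) = (\<Prod>i<n. f (n - Suc i))"
    by (simp add: atLeast0LessThan prod.nat_diff_reindex)
  finally show ?thesis .
qed

lemma sum_atMost_double:
  fixes g :: "nat \<Rightarrow> 'a :: comm_monoid_add"
  shows "(\<Sum>k\<le>2 * n. g k) = g n + (\<Sum>i<n. g (n + Suc i)) + (\<Sum>i<n. g (n - Suc i))"
proof -
  have "(\<Sum>k\<le>2 * n. g k) = (\<Sum>k\<in>{0..<Suc (2 * n)}. g k)"
    by (simp add: atLeast0LessThan lessThan_Suc_atMost)
  also have "\<dots> = (\<Sum>k\<in>{0..<n}. g k) + (\<Sum>k\<in>{n..<Suc (2 * n)}. g k)"
    by (rule sum.atLeastLessThan_concat[symmetric]) auto
  also have "(\<Sum>k\<in>{n..<Suc (2 * n)}. g k) = g n + (\<Sum>k\<in>{Suc n..<Suc (2 * n)}. g k)"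
    by (subst sum.atLeast_Suc_lessThan) auto
  also have "(\<Sum>k\<in>{Suc n..<Suc (2 * n)}. g k) = (\<Sum>i<n. g (n + Suc i))"
    using sum.shift_bounds_nat_ivl[of g 0 "Suc n" n] by (simp add: mult_2 atLeast0LessThan add.commute)
  also have "(\<Sum>k\<in>{0..<n}. g k) = (\<Sum>i<n. g (n - Suc i))"
    by (simp add: atLeast0LessThan sum.nat_diff_reindex)
  finally show ?thesis
    by (simp add: algebra_simps)
qed

lemma prod_power_odd: "(\<Prod>i<n. y ^ (2 * i + 1)) = y ^ (n\<^sup>2)"
  for y :: "'a :: comm_monoid_mult"
proof (induction n)
  case (Suc n)
  have "(\<Prod>i<Suc n. y ^ (2 * i + 1)) = y ^ (n\<^sup>2) * y ^ (2 * n + 1)"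
    by (simp only: prod.lessThan_Suc Suc.IH)
  also have "\<dots> = y ^ (n\<^sup>2 + (2 * n + 1))"
    by (simp only: power_add)
  also have "n\<^sup>2 + (2 * n + 1) = (Suc n)\<^sup>2"
    by (simp add: power2_eq_square)
  finally show ?case .
qed simp

lemma double_choose_two_plus: "2 * (k choose 2) + k = k\<^sup>2"
  by (induction k) (auto simp: numeral_2_eq_2 power2_eq_square)

lemma jacobi_finite_term:
  fixes p z :: "'a :: field"
  shows "(p\<^sup>2) ^ (k choose 2) * (z * p * (1 / p) ^ (2 * n)) ^ k
       = z ^ k * (p ^ (k\<^sup>2) * (1 / p) ^ (2 * n * k))"
proof -
  have "(p\<^sup>2) ^ (k choose 2) * p ^ k = p ^ (k\<^sup>2)"
    by (simp only: power_mult[symmetric] power_add[symmetric] double_choose_two_plus)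
  then show ?thesis
    by (simp add: power_mult_distrib power_mult[symmetric] mult_ac)
qed

(* The q-binomial theorem at x = z p^(1 - 2n): its factors j = n + i and j = n - 1 - i give the
   two factors of the i-th term of the finite triple product. *)
lemma jacobi_finite_product_side:
  fixes p z :: "'a :: field"
  assumes p: "p \<noteq> 0" and z: "z \<noteq> 0"
  shows "(\<Prod>j<2 * n. 1 + z * p * (1 / p) ^ (2 * n) * (p\<^sup>2) ^ j)
       = z ^ n * (1 / p) ^ (n\<^sup>2) * (\<Prod>i<n. (1 + z * p ^ (2 * i + 1)) * (1 + (1 / z) * p ^ (2 * i + 1)))"
    (is "_ = _ * ?T")
proof -
  define x where "x = z * p * (1 / p) ^ (2 * n)"
  have x_power: "x * (p\<^sup>2) ^ j = z * (p ^ (2 * j + 1) * (1 / p) ^ (2 * n))" for j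
    by (simp add: x_def power_mult[symmetric] mult_ac)
  have upper: "1 + x * (p\<^sup>2) ^ (n + i) = 1 + z * p ^ (2 * i + 1)" for i
    using power_mult_inverse_power_eq[OF p, of "2 * (n + i) + 1" 0 "2 * n" "2 * i + 1"]
    by (simp add: x_power)
  have lower: "1 + x * (p\<^sup>2) ^ (n - Suc i) = z * (1 / p) ^ (2 * i + 1) * (1 + (1 / z) * p ^ (2 * i + 1))"
    if "i < n" for i
  proof -
    have "x * (p\<^sup>2) ^ (n - Suc i) = z * (1 / p) ^ (2 * i + 1)"
      using power_mult_inverse_power_eq[OF p, of "2 * (n - Suc i) + 1" "2 * i + 1" "2 * n" 0] that
      by (simp add: x_power)
    moreover have "(1 / p) ^ (2 * i + 1) * p ^ (2 * i + 1) = 1" and "z * (1 / z) = 1"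
      using p z by (simp_all add: power_one_over)
    moreover have "z * (1 / p) ^ (2 * i + 1) * (1 + (1 / z) * p ^ (2 * i + 1))
        = z * (1 / p) ^ (2 * i + 1) + (z * (1 / z)) * ((1 / p) ^ (2 * i + 1) * p ^ (2 * i + 1))"
      by (simp only: ring_distribs mult_1_right mult_1_left mult_ac)
    ultimately show ?thesis
      by (simp add: add.commute)
  qed
  have "(\<Prod>j<2 * n. 1 + x * (p\<^sup>2) ^ j)
      = (\<Prod>i<n. z * (1 / p) ^ (2 * i + 1) * (1 + (1 / z) * p ^ (2 * i + 1)))
        * (\<Prod>i<n. 1 + z * p ^ (2 * i + 1))"
    by (simp add: prod_lessThan_double upper lower)
  also have "\<dots> = (\<Prod>i<n. z) * (\<Prod>i<n. (1 / p) ^ (2 * i + 1))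
      * ((\<Prod>i<n. 1 + z * p ^ (2 * i + 1)) * (\<Prod>i<n. 1 + (1 / z) * p ^ (2 * i + 1)))"
    by (simp only: prod.distrib mult_ac)
  also have "\<dots> = z ^ n * (1 / p) ^ (n\<^sup>2) * ?T"
    by (simp only: prod.distrib prod_power_odd prod_constant card_lessThan)
  finally show ?thesis
    by (simp add: x_def)
qed

lemma jacobi_finite_sum_side:
  fixes p z :: "'a :: real_normed_field"
  assumes p: "p \<noteq> 0" and z: "z \<noteq> 0" and p1: "norm p < 1"
  shows "(\<Sum>k\<le>2 * n. qbinomial (p\<^sup>2) (2 * n) k * (p\<^sup>2) ^ (k choose 2)
             * (z * p * (1 / p) ^ (2 * n)) ^ k)
       = z ^ n * (1 / p) ^ (n\<^sup>2) * (qbinomial (p\<^sup>2) (2 * n) n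
           + (\<Sum>i<n. qbinomial (p\<^sup>2) (2 * n) (n + Suc i) * p ^ (Suc i)\<^sup>2
                 * (z ^ Suc i + (1 / z) ^ Suc i)))"
    (is "(\<Sum>k\<le>2 * n. ?g k) = ?K * (?c + (\<Sum>i<n. ?a i))")
proof -
  let ?G = "qbinomial (p\<^sup>2) (2 * n)"
  have g_eq: "?g k = ?G k * z ^ k * (p ^ (k\<^sup>2) * (1 / p) ^ (2 * n * k))" for k
    using jacobi_finite_term[of p k z n] by (simp only: mult.assoc)
  have centre: "?g n = ?K * ?c"
  proof -
    have "p ^ (n\<^sup>2) * (1 / p) ^ (2 * n * n) = (1 / p) ^ (n\<^sup>2)"
      using power_mult_inverse_power_eq[OF p, of "n\<^sup>2" "n\<^sup>2" "2 * n * n" 0]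
      by (simp add: power2_eq_square)
    then show ?thesis
      unfolding g_eq by (simp add: mult_ac)
  qed
  have upper: "?g (n + Suc i) = ?K * (?G (n + Suc i) * p ^ (Suc i)\<^sup>2 * z ^ Suc i)" for i
  proof -
    have "p ^ (n + Suc i)\<^sup>2 * (1 / p) ^ (2 * n * (n + Suc i)) = p ^ (Suc i)\<^sup>2 * (1 / p) ^ (n\<^sup>2)"
      by (rule power_mult_inverse_power_eq[OF p]) (simp add: power2_eq_square algebra_simps)
    then show ?thesis
      unfolding g_eq by (simp add: power_add mult_ac)
  qed
  have lower: "?g (n - Suc i) = ?K * (?G (n + Suc i) * p ^ (Suc i)\<^sup>2 * (1 / z) ^ Suc i)"
    if i_n: "i < n" for i
  proof -
    obtain d where n: "n = d + Suc i"
      using less_imp_Suc_add[OF i_n] by (auto simp: add.commute)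
    have "p ^ (d\<^sup>2) * (1 / p) ^ (2 * n * d) = p ^ (Suc i)\<^sup>2 * (1 / p) ^ (n\<^sup>2)"
      by (rule power_mult_inverse_power_eq[OF p]) (simp add: n power2_eq_square algebra_simps)
    moreover have "z ^ d = z ^ n * (1 / z) ^ Suc i"
      using z by (simp add: n power_add power_one_over)
    moreover have "?G d = ?G (n + Suc i)"
    proof -
      have "norm (p\<^sup>2) < 1"
        using p1 by (simp add: norm_power power_less_one_iff)
      moreover have "2 * n - (n + Suc i) = d"
        by (simp add: n)
      ultimately show ?thesis
        using qbinomial_symmetric[of "p\<^sup>2" "n + Suc i" "2 * n"] i_n by simp
    qed
    moreover have "n - Suc i = d"
      by (simp add: n)
    ultimately show ?thesis
      unfolding g_eq by (simp add: mult_ac)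
  qed
  have "(\<Sum>k\<le>2 * n. ?g k) = ?g n + (\<Sum>i<n. ?g (n + Suc i)) + (\<Sum>i<n. ?g (n - Suc i))"
    by (rule sum_atMost_double)
  also have "(\<Sum>i<n. ?g (n + Suc i)) = (\<Sum>i<n. ?K * (?G (n + Suc i) * p ^ (Suc i)\<^sup>2 * z ^ Suc i))"
    by (rule sum.cong[OF refl], rule upper)
  also have "(\<Sum>i<n. ?g (n - Suc i)) = (\<Sum>i<n. ?K * (?G (n + Suc i) * p ^ (Suc i)\<^sup>2 * (1 / z) ^ Suc i))"
    by (rule sum.cong[OF refl], rule lower) simp
  also have "?g n + (\<Sum>i<n. ?K * (?G (n + Suc i) * p ^ (Suc i)\<^sup>2 * z ^ Suc i))
      + (\<Sum>i<n. ?K * (?G (n + Suc i) * p ^ (Suc i)\<^sup>2 * (1 / z) ^ Suc i)) = ?K * (?c + (\<Sum>i<n. ?a i))"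
    by (simp only: centre sum_distrib_left sum.distrib distrib_left add.assoc)
  finally show ?thesis .
qed

theorem jacobi_triple_product_finite:
  fixes p z :: "'a :: real_normed_field"
  assumes p: "p \<noteq> 0" and z: "z \<noteq> 0" and p1: "norm p < 1"
  shows "(\<Prod>i<n. (1 + z * p ^ (2 * i + 1)) * (1 + (1 / z) * p ^ (2 * i + 1)))
       = qbinomial (p\<^sup>2) (2 * n) n
         + (\<Sum>i<n. qbinomial (p\<^sup>2) (2 * n) (n + Suc i) * p ^ (Suc i)\<^sup>2
               * (z ^ Suc i + (1 / z) ^ Suc i))"
    (is "?T = ?S")
proof -
  have "z ^ n * (1 / p) ^ (n\<^sup>2) \<noteq> 0"
    using p z by simp
  moreover have "z ^ n * (1 / p) ^ (n\<^sup>2) * ?T = z ^ n * (1 / p) ^ (n\<^sup>2) * ?S"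
    using qbinomial_theorem[of "z * p * (1 / p) ^ (2 * n)" "p\<^sup>2" "2 * n"]
    by (simp only: jacobi_finite_product_side[OF p z] jacobi_finite_sum_side[OF p z p1])
  ultimately show ?thesis
    using p z by simp
qed

(* theta p z is the bilateral series of p^(n^2) z^n over all integers n, with the terms for
   n and -n taken together. *)
definition theta :: "complex \<Rightarrow> complex \<Rightarrow> complex" where
  "theta p z = 1 + (\<Sum>i. p ^ (Suc i)\<^sup>2 * (z ^ Suc i + (1 / z) ^ Suc i))"

lemma summable_power_square_mult_power:
  fixes a r :: real
  assumes "0 \<le> a" and "a < 1" and "0 \<le> r"
  shows "summable (\<lambda>i. a ^ (Suc i)\<^sup>2 * r ^ Suc i)"
proof (rule summable_comparison_test_ev)
  have "(\<lambda>i. a ^ Suc i * r) \<longlonglongrightarrow> 0"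
    using assms by (intro tendsto_mult_left_zero LIMSEQ_Suc[OF LIMSEQ_power_zero]) simp
  then have "\<forall>\<^sub>F i in sequentially. a ^ Suc i * r < 1 / 2"
    by (intro order_tendstoD) auto
  then show "\<forall>\<^sub>F i in sequentially. norm (a ^ (Suc i)\<^sup>2 * r ^ Suc i) \<le> (1 / 2) ^ Suc i"
  proof eventually_elim
    case (elim i)
    have "a ^ (Suc i)\<^sup>2 * r ^ Suc i = (a ^ Suc i * r) ^ Suc i"
      by (simp only: power2_eq_square power_mult power_mult_distrib)
    also have "\<dots> \<le> (1 / 2) ^ Suc i"
      using elim assms by (intro power_mono) auto
    finally show ?case
      using assms by simp
  qed
  show "summable (\<lambda>i. (1 / 2 :: real) ^ Suc i)"
    using summable_Suc_iff[of "\<lambda>i. (1 / 2 :: real) ^ i"] summable_geometric[of "1 / 2 :: real"] by simp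
qed

lemma summable_norm_theta_terms:
  fixes p z :: complex
  assumes "norm p < 1"
  shows "summable (\<lambda>i. norm (p ^ (Suc i)\<^sup>2 * (z ^ Suc i + (1 / z) ^ Suc i)))"
proof (rule summable_comparison_test)
  show "summable (\<lambda>i. norm p ^ (Suc i)\<^sup>2 * norm z ^ Suc i
      + norm p ^ (Suc i)\<^sup>2 * norm (1 / z) ^ Suc i)"
    using assms by (intro summable_add summable_power_square_mult_power) auto
  have "norm (z ^ Suc i + (1 / z) ^ Suc i) \<le> norm z ^ Suc i + norm (1 / z) ^ Suc i" for i
    by (metis norm_power norm_triangle_ineq)
  then show "\<exists>N. \<forall>i\<ge>N. norm (norm (p ^ (Suc i)\<^sup>2 * (z ^ Suc i + (1 / z) ^ Suc i)))
      \<le> norm p ^ (Suc i)\<^sup>2 * norm z ^ Suc i + norm p ^ (Suc i)\<^sup>2 * norm (1 / z) ^ Suc i"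
    by (simp add: norm_mult norm_power mult_left_mono flip: distrib_left)
qed

lemma theta_sums:
  fixes p z :: complex
  assumes "norm p < 1"
  shows "(\<lambda>i. p ^ (Suc i)\<^sup>2 * (z ^ Suc i + (1 / z) ^ Suc i)) sums (theta p z - 1)"
  using summable_norm_cancel[OF summable_norm_theta_terms[OF assms]]
  by (simp add: theta_def summable_sums)

theorem jacobi_triple_product:
  fixes p z :: complex
  assumes p1: "norm p < 1" and z: "z \<noteq> 0"
  shows "qpoch (p\<^sup>2) (p\<^sup>2) * qpoch (- (z * p)) (p\<^sup>2) * qpoch (- (p / z)) (p\<^sup>2) = theta p z"
proof (cases "p = 0")
  case True
  then show ?thesis
    by (simp add: qpoch_def theta_def power2_eq_square)
next
  case p: False
  define P where "P = p\<^sup>2"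
  define c where "c i = p ^ (Suc i)\<^sup>2 * (z ^ Suc i + (1 / z) ^ Suc i)" for i
  have P1: "norm P < 1"
    using p1 by (simp add: P_def norm_power power_less_one_iff)
  have Q: "qpoch P P \<noteq> 0"
    by (rule qpoch_nonzero[OF P1 P1])
  have "(\<lambda>n. (\<Prod>i<n. 1 - (- (z * p)) * P ^ i) * (\<Prod>i<n. 1 - (- (p / z)) * P ^ i))
      \<longlonglongrightarrow> qpoch (- (z * p)) P * qpoch (- (p / z)) P"
    by (intro tendsto_mult qpoch_LIMSEQ P1)
  moreover have "(\<Prod>i<n. 1 - (- (z * p)) * P ^ i) * (\<Prod>i<n. 1 - (- (p / z)) * P ^ i)
      = qbinomial P (2 * n) n + (\<Sum>i<n. qbinomial P (2 * n) (n + Suc i) * c i)" for n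
    using jacobi_triple_product_finite[OF p z p1, of n]
    by (simp add: P_def c_def prod.distrib power_mult[symmetric] mult_ac)
  ultimately have "(\<lambda>n. qbinomial P (2 * n) (n + 0) + (\<Sum>i<n. qbinomial P (2 * n) (n + Suc i) * c i))
      \<longlonglongrightarrow> qpoch (- (z * p)) P * qpoch (- (p / z)) P"
    by simp
  moreover have "(\<lambda>n. qbinomial P (2 * n) (n + 0) + (\<Sum>i<n. qbinomial P (2 * n) (n + Suc i) * c i))
      \<longlonglongrightarrow> 1 / qpoch P P + (\<Sum>i. c i) / qpoch P P"
    using p1 unfolding c_def
    by (intro tendsto_add qbinomial_central_LIMSEQ qbinomial_weighted_sum_LIMSEQ P1 summable_norm_theta_terms)
  ultimately have "qpoch (- (z * p)) P * qpoch (- (p / z)) P = theta p z / qpoch P P"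
    using LIMSEQ_unique by (fastforce simp: theta_def c_def add_divide_distrib)
  then show ?thesis
    using Q by (simp add: P_def field_simps)
qed


section \<open>Triangular numbers and the 2-dissection\<close>

lemma double_Suc_choose_two: "2 * (Suc j choose 2) = j * Suc j"
  using double_choose_two_plus[of "Suc j"] by (simp add: power2_eq_square)

lemma summable_power_Suc_choose_two:
  fixes q :: "'a :: {real_normed_field, banach}"
  assumes "norm q < 1"
  shows "summable (\<lambda>j. q ^ (Suc j choose 2))"
proof (rule summable_comparison_test)
  have "j \<le> Suc j choose 2" for j
    using double_Suc_choose_two[of j] by (cases j) auto
  then show "\<exists>N. \<forall>j\<ge>N. norm (q ^ (Suc j choose 2)) \<le> norm q ^ j"
    using assms by (auto simp: norm_power intro!: power_decreasing)
  show "summable (\<lambda>j. norm q ^ j)"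
    using assms by simp
qed

lemma sums_group_shifted:
  fixes f :: "nat \<Rightarrow> 'a :: real_normed_vector"
  assumes "f sums s" and "0 < k"
  shows "(\<lambda>n. \<Sum>r<k. f (m + k * n + r)) sums (s - (\<Sum>j<m. f j))"
proof -
  have "(\<lambda>j. f (j + m)) sums (s - (\<Sum>j<m. f j))"
    using assms(1) by (simp add: sums_iff_shift)
  from sums_group[OF this assms(2)]
  show ?thesis
    by (simp add: sum.atLeastLessThan_shift_0[of _ "n * k" for n] atLeast0LessThan ac_simps)
qed

lemma power_mult_theta_term:
  fixes q :: "'a :: field"
  assumes "q \<noteq> 0" and "e\<^sub>1 = c + a * n\<^sup>2 + b * n" and "e\<^sub>2 + b * n = c + a * n\<^sup>2"
  shows "q ^ c * ((q ^ a) ^ n\<^sup>2 * ((q ^ b) ^ n + (1 / q ^ b) ^ n)) = q ^ e\<^sub>1 + q ^ e\<^sub>2"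
proof -
  have "q ^ (c + a * n\<^sup>2) * (1 / q) ^ (b * n) = q ^ e\<^sub>2 * (1 / q) ^ 0"
    using assms by (intro power_mult_inverse_power_eq) auto
  then show ?thesis
    using assms by (simp add: power_mult[symmetric] power_add power_one_over distrib_left mult_ac)
qed

lemma theta_eq_triangular_sum:
  fixes q :: complex
  assumes q: "q \<noteq> 0" and q1: "norm q < 1"
  shows "theta (q\<^sup>2) q = (\<Sum>j. q ^ (Suc j choose 2))"
proof -
  let ?t = "\<lambda>j. q ^ (Suc j choose 2)"
  have "(\<lambda>n. \<Sum>r<2. ?t (1 + 2 * n + r)) sums ((\<Sum>j. ?t j) - (\<Sum>j<1. ?t j))"
    using summable_power_Suc_choose_two[OF q1] by (intro sums_group_shifted summable_sums) auto
  moreover have "(\<Sum>r<2. ?t (1 + 2 * n + r)) = (q\<^sup>2) ^ (Suc n)\<^sup>2 * (q ^ Suc n + (1 / q) ^ Suc n)" for n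
  proof -
    have "q ^ 0 * ((q ^ 2) ^ (Suc n)\<^sup>2 * ((q ^ 1) ^ Suc n + (1 / q ^ 1) ^ Suc n))
        = q ^ (Suc (2 * n + 2) choose 2) + q ^ (Suc (2 * n + 1) choose 2)"
      using double_Suc_choose_two[of "2 * n + 2"] double_Suc_choose_two[of "2 * n + 1"]
      by (intro power_mult_theta_term[OF q]) (simp_all add: algebra_simps power2_eq_square)
    then show ?thesis
      by (simp add: numeral_2_eq_2 add.commute)
  qed
  ultimately have "(\<lambda>n. (q\<^sup>2) ^ (Suc n)\<^sup>2 * (q ^ Suc n + (1 / q) ^ Suc n)) sums ((\<Sum>j. ?t j) - 1)"
    by (simp add: numeral_2_eq_2)
  then show ?thesis
    by (simp add: theta_def sums_iff)
qed

(* The exponents Suc j choose 2 with j = 4n + 3, 4n + 4 produce theta (q^8) (q^2), those with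
   j = 4n + 2, 4n + 5 produce q theta (q^8) (q^6). *)
lemma triangular_sum_dissection:
  fixes q :: complex
  assumes q: "q \<noteq> 0" and q1: "norm q < 1"
  shows "(\<Sum>j. q ^ (Suc j choose 2)) = theta (q ^ 8) (q\<^sup>2) + q * theta (q ^ 8) (q ^ 6)"
proof -
  let ?t = "\<lambda>j. q ^ (Suc j choose 2)"
  have q8: "norm (q ^ 8) < 1"
    using q1 by (simp add: norm_power power_less_one_iff)
  have "(\<lambda>n. \<Sum>r<4. ?t (2 + 4 * n + r)) sums ((\<Sum>j. ?t j) - (\<Sum>j<2. ?t j))"
    using summable_power_Suc_choose_two[OF q1] by (intro sums_group_shifted summable_sums) auto
  moreover have "(\<lambda>n. (q ^ 8) ^ (Suc n)\<^sup>2 * ((q\<^sup>2) ^ Suc n + (1 / q\<^sup>2) ^ Suc n)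
      + q * ((q ^ 8) ^ (Suc n)\<^sup>2 * ((q ^ 6) ^ Suc n + (1 / q ^ 6) ^ Suc n)))
      sums (theta (q ^ 8) (q\<^sup>2) - 1 + q * (theta (q ^ 8) (q ^ 6) - 1))"
    by (intro sums_add sums_mult theta_sums q8)
  moreover have "(q ^ 8) ^ (Suc n)\<^sup>2 * ((q\<^sup>2) ^ Suc n + (1 / q\<^sup>2) ^ Suc n)
      + q * ((q ^ 8) ^ (Suc n)\<^sup>2 * ((q ^ 6) ^ Suc n + (1 / q ^ 6) ^ Suc n))
      = (\<Sum>r<4. ?t (2 + 4 * n + r))" for n
  proof -
    have "q ^ 0 * ((q ^ 8) ^ (Suc n)\<^sup>2 * ((q ^ 2) ^ Suc n + (1 / q ^ 2) ^ Suc n))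
        = ?t (4 * n + 4) + ?t (4 * n + 3)"
      using double_Suc_choose_two[of "4 * n + 4"] double_Suc_choose_two[of "4 * n + 3"]
      by (intro power_mult_theta_term[OF q]) (simp_all add: algebra_simps power2_eq_square)
    moreover have "q ^ 1 * ((q ^ 8) ^ (Suc n)\<^sup>2 * ((q ^ 6) ^ Suc n + (1 / q ^ 6) ^ Suc n))
        = ?t (4 * n + 5) + ?t (4 * n + 2)"
      using double_Suc_choose_two[of "4 * n + 5"] double_Suc_choose_two[of "4 * n + 2"]
      by (intro power_mult_theta_term[OF q]) (simp_all add: algebra_simps power2_eq_square)
    ultimately show ?thesis
      by (simp add: eval_nat_numeral algebra_simps)
  qed
  ultimately have "(\<Sum>j. ?t j) - (\<Sum>j<2. ?t j) = theta (q ^ 8) (q\<^sup>2) - 1 + q * (theta (q ^ 8) (q ^ 6) - 1)"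
    using sums_unique2 by force
  then show ?thesis
    by (simp add: eval_nat_numeral algebra_simps)
qed

lemma qpoch_neg_q_mult_qpoch_q4:
  fixes q :: complex
  assumes "norm q < 1" and q: "q \<noteq> 0"
  shows "qpoch (- q) (q\<^sup>2) * qpoch (q ^ 4) (q ^ 4) = theta (q\<^sup>2) q"
proof -
  have q2: "norm (q\<^sup>2) < 1"
    using assms(1) by (simp add: norm_power power_less_one_iff)
  show ?thesis
    using jacobi_triple_product[OF q2 q] qpoch_dissect_2[OF q2, of "- q"] q
    by (simp add: power_mult[symmetric] power_add[symmetric] eval_nat_numeral field_simps)
qed

lemma qpoch_q4_dissections:
  fixes q :: complex
  assumes "norm q < 1"
  shows "qpoch (q ^ 4) (q ^ 4)
       = qpoch (q ^ 4) (q ^ 16) * qpoch (q ^ 8) (q ^ 16) * qpoch (q ^ 12) (q ^ 16) * qpoch (q ^ 16) (q ^ 16)"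
    and "qpoch (- (q\<^sup>2)) (q ^ 4)
       = qpoch (- (q\<^sup>2)) (q ^ 16) * qpoch (- (q ^ 6)) (q ^ 16) * qpoch (- (q ^ 10)) (q ^ 16)
         * qpoch (- (q ^ 14)) (q ^ 16)"
  using qpoch_dissect_4[of "q ^ 4" "q ^ 4"] qpoch_dissect_4[of "q ^ 4" "- (q\<^sup>2)"] assms
  by (simp_all add: norm_power power_less_one_iff power_mult[symmetric] power_add[symmetric])

lemma qpoch_nonzero_q16:
  fixes q :: complex
  assumes "norm q < 1" and "n > 0"
  shows "qpoch (q ^ n) (q ^ 16) \<noteq> 0" and "qpoch (- (q ^ n)) (q ^ 16) \<noteq> 0"
  using assms by (simp_all add: qpoch_nonzero norm_power power_less_one_iff)

lemma qpoch_neg_q_dissection: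
  fixes q :: complex
  assumes q1: "norm q < 1"
  shows "qpoch (- q) (q\<^sup>2)
       = (qpoch (- (q ^ 6)) (q ^ 16) * qpoch (- (q ^ 10)) (q ^ 16)
           + q * qpoch (- (q\<^sup>2)) (q ^ 16) * qpoch (- (q ^ 14)) (q ^ 16))
         / (qpoch (q ^ 4) (q ^ 16) * qpoch (q ^ 8) (q ^ 16) * qpoch (q ^ 12) (q ^ 16))"
    (is "_ = ?N / ?E")
proof (cases "q = 0")
  case True
  then show ?thesis
    by (simp add: qpoch_def)
next
  case q: False
  let ?S = "qpoch (q ^ 16) (q ^ 16)"
  have q8: "norm (q ^ 8) < 1"
    using q1 by (simp add: norm_power power_less_one_iff)
  have "q ^ 8 / q\<^sup>2 = q ^ 6" and "q ^ 8 / q ^ 6 = q\<^sup>2"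
    using q by (simp_all add: field_simps power_add[symmetric])
  have "qpoch (- q) (q\<^sup>2) * qpoch (q ^ 4) (q ^ 4) = theta (q\<^sup>2) q"
    by (rule qpoch_neg_q_mult_qpoch_q4[OF q1 q])
  also have "\<dots> = theta (q ^ 8) (q\<^sup>2) + q * theta (q ^ 8) (q ^ 6)"
    using theta_eq_triangular_sum[OF q q1] triangular_sum_dissection[OF q q1] by simp
  also have "theta (q ^ 8) (q\<^sup>2) = ?S * qpoch (- (q ^ 10)) (q ^ 16) * qpoch (- (q ^ 6)) (q ^ 16)"
    using jacobi_triple_product[OF q8, of "q\<^sup>2"] q
    by (simp add: power_mult[symmetric] power_add[symmetric] \<open>q ^ 8 / q\<^sup>2 = q ^ 6\<close>)
  also have "theta (q ^ 8) (q ^ 6) = ?S * qpoch (- (q ^ 14)) (q ^ 16) * qpoch (- (q\<^sup>2)) (q ^ 16)"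
    using jacobi_triple_product[OF q8, of "q ^ 6"] q
    by (simp add: power_mult[symmetric] power_add[symmetric] \<open>q ^ 8 / q ^ 6 = q\<^sup>2\<close>)
  finally have "(qpoch (- q) (q\<^sup>2) * ?E) * ?S = ?N * ?S"
    unfolding qpoch_q4_dissections(1)[OF q1] by (simp add: algebra_simps)
  then have "qpoch (- q) (q\<^sup>2) * ?E = ?N"
    using mult_right_cancel[OF qpoch_nonzero_q16(1)[OF q1, of 16]] by simp
  then show ?thesis
    using qpoch_nonzero_q16[OF q1] by (simp add: field_simps)
qed

lemma Fdis_neg_square:
  fixes q :: complex
  assumes "norm q < 1" and "i \<le> 3"
  shows "Fdis i (- (q\<^sup>2)) = 1 / (qpoch (- (q\<^sup>2)) (q ^ 4) * qpoch (q ^ 4) (q ^ 4))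
     * (1 / (qpoch (- (q ^ (2 + 4 * i))) (q ^ 16) * qpoch (q ^ 4) (q ^ 16) * qpoch (q ^ 8) (q ^ 16)
           * qpoch (q ^ 12) (q ^ 16) * qpoch (- (q ^ (14 - 4 * i))) (q ^ 16)))"
proof -
  have odd_power: "(- (q\<^sup>2)) ^ k = - (q ^ (2 * k))" if "odd k" for k
    using that by (simp add: power_minus_odd power_mult)
  have "odd (1 + 2 * i)" "odd (7 - 2 * i)" "2 * (1 + 2 * i) = 2 + 4 * i" "2 * (7 - 2 * i) = 14 - 4 * i"
    using assms(2) by presburger+
  then have "(- (q\<^sup>2)) ^ (1 + 2 * i) = - (q ^ (2 + 4 * i))"
    and "(- (q\<^sup>2)) ^ (7 - 2 * i) = - (q ^ (14 - 4 * i))"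
    by (metis odd_power)+
  moreover have "qpoch (- (q\<^sup>2)) (- (q\<^sup>2)) = qpoch (- (q\<^sup>2)) (q ^ 4) * qpoch (q ^ 4) (q ^ 4)"
    using qpoch_dissect_2[of "- (q\<^sup>2)" "- (q\<^sup>2)"] assms(1)
    by (simp add: norm_power power_less_one_iff power_mult[symmetric] power_add[symmetric])
  ultimately show ?thesis
    by (simp add: Fdis_def power_mult[symmetric] power_add[symmetric])
qed

theorem theorem1:
  fixes q :: complex
  assumes "norm q < 1"
  shows "qpoch (- q) (q ^ 2) / (qpoch (q ^ 4) (q ^ 4) * (qpoch (- (q ^ 2)) (q ^ 4)) ^ 2)
         = Fdis 0 (- (q ^ 2)) + q * Fdis 1 (- (q ^ 2))"
  using qpoch_nonzero_q16[OF assms]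
  by (simp add: Fdis_neg_square[OF assms] qpoch_q4_dissections[OF assms] qpoch_neg_q_dissection[OF assms]
      field_simps)
    (simp add: power2_eq_square)

end
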